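(* Let $S$ be a quaternionic structure of local type of order $n$. (i) If $n$ is even and $-1=1$, then $M(S)=E_n$, the $n\times n$ matrix with $1$ on the anti-diagonal (entries $(i,n-1-i)$) and $0$ elsewhere. (ii) If $n$ is even and $-1\ne1$, then $M(S)$ is the $n\times n$ matrix with $M_{0,n-1}=M_{n-1,0}=M_{n-1,n-1}=1$, $M_{i,n-1-i}=1$ for $1\le i\le n-2$, and all other entries $0$. (iii) If $n$ is odd, then $M(S)$ is the $n\times n$ matrix with $M_{0,0}=1$, $M_{i,n-i}=1$ for $1\le i\le n-1$, and all other entries $0$.
   Context: A quaternionic structure is a triple $S=(G,-1,q)$ where $G$ is a multiplicative group in which every element is its own inverse (an $\mathbb F_2$-vector space), $-1\in G$ is distinguished (possibly $-1=1$), $-a:=(-1)a$, and $q:G\times G\to Q$ is surjective onto a set $Q$ with distinguished $0$, satisfying for all $a,b,c,d$: (Q1) $q(a,-a)=0$; (Q2) $q(a,b)=q(b,a)$; (Q3) $q(a,b)=q(a,c)\iff q(a,bc)=0$; (Q4) $q(a,b)=q(c,d)\iff\exists x$: $q(a,b)=q(a,x)=q(c,x)=q(c,d)$. The order is $\dim_{\mathbb F_2}G$. $S$ is nondegenerate if $\{a:q(a,x)=0\ \forall x\}=\{1\}$, and of local type if finite, nondegenerate, of order at least $3$, with exactly two quaternions. $B(S)$ is the abelian group (operation $\ast$) generated by $Q$ subject only to $q(a,b)\ast q(a,c)=q(a,bc)$. On $\mathbb N_0$, $\ast$ is bitwise XOR. A basis of $S$ is an ordered $\mathbb F_2$-basis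 $\mathcal A=(a_0,\dots,a_{n-1})$ of $G$ with $a_0=-1$ whenever $-1\ne1$. For an ordered basis $\mathcal B=(q_0,\dots,q_{m-1})$ of $B(S)$, $\phi_{\mathcal B}:B(S)\to(\{0,\dots,2^m-1\},\ast)$ is the isomorphism $q_k\mapsto2^k$, and $M_{\mathcal A,\mathcal B}(S)=(\phi_{\mathcal B}(q(a_i,a_j)))_{0\le i,j\le n-1}$. Matrices in $\mathrm{Mat}_n(\mathbb N_0)$ are ordered lexicographically, comparing entries row by row with the usual order on $\mathbb N_0$. The normal quaternionic matrix $M(S)$ is the lexicographic minimum of $M_{\mathcal A,\mathcal B}(S)$ over all bases $\mathcal A$ of $S$ and all ordered bases $\mathcal B$ of $B(S)$. *)

theory Defs
  imports "HOL-Algebra.Free_Abelian_Groups" "HOL-Algebra.Coset" "HOL-Library.List_Lexorder"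
begin

text \<open>A quaternionic structure S = (G, -1, q) is represented by a group G (HOL-Algebra
  monoid record), the distinguished element m (= -1), the map q on carrier G x carrier G
  and the distinguished element z (= 0) of Q.\<close>

definition quats :: "'a monoid \<Rightarrow> ('a \<Rightarrow> 'a \<Rightarrow> 'b) \<Rightarrow> 'b set" where
  "quats G q = (\<lambda>(a,b). q a b) ` (carrier G \<times> carrier G)"

definition quat_struct :: "'a monoid \<Rightarrow> 'a \<Rightarrow> ('a \<Rightarrow> 'a \<Rightarrow> 'b) \<Rightarrow> 'b \<Rightarrow> bool" where
  "quat_struct G m q z \<longleftrightarrow>
     group G \<and> (\<forall>x\<in>carrier G. x \<otimes>\<^bsub>G\<^esub> x = \<one>\<^bsub>G\<^esub>) \<and> m \<in> carrier G \<and> z \<in> quats G q \<and>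
     (\<forall>a\<in>carrier G. q a (m \<otimes>\<^bsub>G\<^esub> a) = z) \<and>
     (\<forall>a\<in>carrier G. \<forall>b\<in>carrier G. q a b = q b a) \<and>
     (\<forall>a\<in>carrier G. \<forall>b\<in>carrier G. \<forall>c\<in>carrier G. q a b = q a c \<longleftrightarrow> q a (b \<otimes>\<^bsub>G\<^esub> c) = z) \<and>
     (\<forall>a\<in>carrier G. \<forall>b\<in>carrier G. \<forall>c\<in>carrier G. \<forall>d\<in>carrier G.
        q a b = q c d \<longleftrightarrow> (\<exists>x\<in>carrier G. q a b = q a x \<and> q a x = q c x \<and> q c x = q c d))"

definition f2_basis :: "('c, 'd) monoid_scheme \<Rightarrow> 'c list \<Rightarrow> bool" where
  "f2_basis K bs \<longleftrightarrow> (\<forall>x\<in>carrier K. x \<otimes>\<^bsub>K\<^esub> x = \<one>\<^bsub>K\<^esub>) \<and> set bs \<subseteq> carrier K \<and>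
     bij_betw (\<lambda>I. finprod K (\<lambda>i. bs ! i) I) (Pow {..<length bs}) (carrier K)"

text \<open>Order = F2-dimension of G.\<close>
definition has_order :: "'a monoid \<Rightarrow> nat \<Rightarrow> bool" where
  "has_order G n \<longleftrightarrow> (\<exists>as. f2_basis G as \<and> length as = n)"

definition nondegenerate :: "'a monoid \<Rightarrow> ('a \<Rightarrow> 'a \<Rightarrow> 'b) \<Rightarrow> 'b \<Rightarrow> bool" where
  "nondegenerate G q z \<longleftrightarrow> {a\<in>carrier G. \<forall>x\<in>carrier G. q a x = z} = {\<one>\<^bsub>G\<^esub>}"

definition local_type :: "'a monoid \<Rightarrow> 'a \<Rightarrow> ('a \<Rightarrow> 'a \<Rightarrow> 'b) \<Rightarrow> 'b \<Rightarrow> bool" where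
  "local_type G m q z \<longleftrightarrow> quat_struct G m q z \<and> finite (carrier G) \<and> nondegenerate G q z \<and>
     (\<exists>n\<ge>3. has_order G n) \<and> card (quats G q) = 2"

definition qbasis :: "'a monoid \<Rightarrow> 'a \<Rightarrow> 'a list \<Rightarrow> bool" where
  "qbasis G m as \<longleftrightarrow> f2_basis G as \<and> (m \<noteq> \<one>\<^bsub>G\<^esub> \<longrightarrow> as \<noteq> [] \<and> as ! 0 = m)"

definition BS_rels :: "'a monoid \<Rightarrow> ('a \<Rightarrow> 'a \<Rightarrow> 'b) \<Rightarrow> ('b \<Rightarrow>\<^sub>0 int) set" where
  "BS_rels G q = {frag_of (q a b) + frag_of (q a c) - frag_of (q a (b \<otimes>\<^bsub>G\<^esub> c)) | a b c.
                    a \<in> carrier G \<and> b \<in> carrier G \<and> c \<in> carrier G}"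

definition BS_sub :: "'a monoid \<Rightarrow> ('a \<Rightarrow> 'a \<Rightarrow> 'b) \<Rightarrow> ('b \<Rightarrow>\<^sub>0 int) set" where
  "BS_sub G q = generate (free_Abelian_group (quats G q)) (BS_rels G q)"

definition BS :: "'a monoid \<Rightarrow> ('a \<Rightarrow> 'a \<Rightarrow> 'b) \<Rightarrow> ('b \<Rightarrow>\<^sub>0 int) set monoid" where
  "BS G q = free_Abelian_group (quats G q) Mod BS_sub G q"

definition BS_of :: "'a monoid \<Rightarrow> ('a \<Rightarrow> 'a \<Rightarrow> 'b) \<Rightarrow> 'b \<Rightarrow> ('b \<Rightarrow>\<^sub>0 int) set" where
  "BS_of G q x = r_coset (free_Abelian_group (quats G q)) (BS_sub G q) (frag_of x)"

definition phi :: "('c, 'd) monoid_scheme \<Rightarrow> 'c list \<Rightarrow> 'c \<Rightarrow> nat" where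
  "phi K bs y = (\<Sum>i\<in>(THE I. I \<subseteq> {..<length bs} \<and> finprod K (\<lambda>i. bs ! i) I = y). 2 ^ i)"

text \<open>Matrices are lists of rows; the list order from List_Lexorder on equal-length
  lists of equal-length rows is exactly the row-by-row lexicographic order.\<close>
definition qmat :: "'a monoid \<Rightarrow> ('a \<Rightarrow> 'a \<Rightarrow> 'b) \<Rightarrow> 'a list \<Rightarrow> ('b \<Rightarrow>\<^sub>0 int) set list
                      \<Rightarrow> nat list list" where
  "qmat G q as bs = map (\<lambda>i. map (\<lambda>j. phi (BS G q) bs (BS_of G q (q (as ! i) (as ! j))))
                       [0..<length as]) [0..<length as]"

definition normal_matrix :: "'a monoid \<Rightarrow> 'a \<Rightarrow> ('a \<Rightarrow> 'a \<Rightarrow> 'b) \<Rightarrow> nat list list" where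
  "normal_matrix G m q = Min {qmat G q as bs | as bs. qbasis G m as \<and> f2_basis (BS G q) bs}"

definition mat_of :: "nat \<Rightarrow> (nat \<Rightarrow> nat \<Rightarrow> nat) \<Rightarrow> nat list list" where
  "mat_of n f = map (\<lambda>i. map (\<lambda>j. f i j) [0..<n]) [0..<n]"

end

theory Submission
  imports Defs
begin

(* Identifying the two quaternions {0, e} with F2, q becomes a nondegenerate symmetric bilinear
   form on the F2-space G for which -1 is characteristic, q(a,a) = q(a,-1) by (Q1), and B(S) is
   cyclic of order two, so M_{A,B}(S) is just the Gram matrix of A.  Splitting off hyperbolic
   planes gives a basis with the stated Gram matrix: if -1 = 1 the form is alternating and has a
   symplectic basis; otherwise -1 is split off either as an anisotropic vector (n odd) or together
   with a partner v in a hyperbolic plane (n even).  Minimality is a greedy argument: if the Gram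
   matrix of some basis agrees with the target before an entry where the target has a 1, the rows
   already fixed have single ones in distinct columns, and a 0 at that entry would let row
   operations turn the current row into a nonzero vector orthogonal to everything. *)

section \<open>Lists and lexicographic order of matrices\<close>

lemma nth_Cons_snoc:
  "i < length xs + 2 \<Longrightarrow>
    (u # xs @ [v]) ! i = (if i = 0 then u else if i \<le> length xs then xs ! (i - 1) else v)"
  by (auto simp: nth_Cons' nth_append)

lemma less_eq_list_nthI:
  fixes xs ys :: "'a::linorder list"
  assumes "length xs = length ys"
    and "\<And>k. k < length xs \<Longrightarrow> \<forall>k'<k. xs ! k' = ys ! k' \<Longrightarrow> xs ! k \<le> ys ! k"
  shows "xs \<le> ys"
  using assms
proof (induction xs arbitrary: ys)
  case Nil
  then show ?case
    by simp
next
  case (Cons x xs)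
  then obtain y ys' where ys: "ys = y # ys'"
    by (cases ys) auto
  have "x \<le> y"
    using Cons.prems(2)[of 0] ys by simp
  moreover have "xs \<le> ys'" if "x = y"
  proof (rule Cons.IH)
    show "length xs = length ys'"
      using Cons.prems(1) ys by simp
    fix k assume "k < length xs" "\<forall>k'<k. xs ! k' = ys' ! k'"
    moreover have "\<forall>k'<Suc k. (x # xs) ! k' = ys ! k'"
      using calculation(2) that ys by (auto simp: less_Suc_eq_0_disj)
    ultimately show "xs ! k \<le> ys' ! k"
      using Cons.prems(2)[of "Suc k"] ys by simp
  qed
  ultimately show ?case
    using ys by (auto simp: order_le_less)
qed

lemma mat_of_le:
  fixes f g :: "nat \<Rightarrow> nat \<Rightarrow> nat"
  assumes "\<And>i j. i < n \<Longrightarrow> j < n \<Longrightarrow> \<forall>i'<i. \<forall>j'<n. f i' j' = g i' j' \<Longrightarrow>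
    \<forall>j'<j. f i j' = g i j' \<Longrightarrow> f i j \<le> g i j"
  shows "mat_of n f \<le> mat_of n g"
  unfolding mat_of_def
proof (rule less_eq_list_nthI)
  let ?F = "map (\<lambda>i. map (f i) [0..<n]) [0..<n]" and ?G = "map (\<lambda>i. map (g i) [0..<n]) [0..<n]"
  fix i assume i: "i < length ?F" and rows: "\<forall>i'<i. ?F ! i' = ?G ! i'"
  have "f i' j' = g i' j'" if "i' < i" "j' < n" for i' j'
    using rows that i by (simp add: map_eq_conv)
  then show "?F ! i \<le> ?G ! i"
    using i assms by (auto intro!: less_eq_list_nthI)
qed simp

section \<open>Boolean groups and their F2-bases\<close>

locale boolean_group = comm_group +
  assumes square_eq_one: "x \<in> carrier G \<Longrightarrow> x \<otimes> x = \<one>"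
begin

lemma m_cancel_self [simp]: "x \<in> carrier G \<Longrightarrow> y \<in> carrier G \<Longrightarrow> x \<otimes> (x \<otimes> y) = y"
  by (metis square_eq_one l_one m_assoc)

lemma subgroup_iff_closed:
  "subgroup H G \<longleftrightarrow> H \<subseteq> carrier G \<and> \<one> \<in> H \<and> (\<forall>a\<in>H. \<forall>b\<in>H. a \<otimes> b \<in> H)"
proof -
  have "inv a = a" if "a \<in> carrier G" for a
    using that square_eq_one by (simp add: inv_equality)
  then show ?thesis
    by (auto simp: subgroup_def)
qed

lemma finprod_symdiff:
  assumes "finite I" "finite J" "f \<in> I \<union> J \<rightarrow> carrier G"
  shows "finprod G f I \<otimes> finprod G f J = finprod G f (sym_diff I J)"
proof -
  have split: "finprod G f K = finprod G f (K - L) \<otimes> finprod G f (K \<inter> L)"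
    if "finite K" "f \<in> K \<rightarrow> carrier G" for K L
    using finprod_Un_disjoint[of "K - L" "K \<inter> L" f] that by (auto simp: Pi_iff Un_Diff_Int)
  have closed: "finprod G f (I - J) \<in> carrier G" "finprod G f (J - I) \<in> carrier G"
    "finprod G f (I \<inter> J) \<in> carrier G"
    using assms(3) by (auto intro!: finprod_closed)
  have "finprod G f I \<otimes> finprod G f J
      = finprod G f (I - J) \<otimes> finprod G f (J - I) \<otimes> (finprod G f (I \<inter> J) \<otimes> finprod G f (I \<inter> J))"
    using split[of I J] split[of J I] assms closed
    by (simp add: Int_commute m_ac)
  also have "\<dots> = finprod G f (sym_diff I J)"
    using assms closed by (auto simp: square_eq_one intro!: finprod_Un_disjoint[symmetric])
  finally show ?thesis .
qed

end

lemma boolean_groupI: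
  assumes "group G" "\<And>x. x \<in> carrier G \<Longrightarrow> x \<otimes>\<^bsub>G\<^esub> x = \<one>\<^bsub>G\<^esub>"
  shows "boolean_group G"
proof -
  interpret group G by fact
  have "x \<otimes>\<^bsub>G\<^esub> y = y \<otimes>\<^bsub>G\<^esub> x" if "x \<in> carrier G" "y \<in> carrier G" for x y
  proof -
    have inv_self: "inv\<^bsub>G\<^esub> a = a" if "a \<in> carrier G" for a
      using assms(2) that by (intro inv_equality) auto
    show ?thesis
      using inv_mult_group[OF that] inv_self that by simp
  qed
  then interpret comm_group G
    by (rule group_comm_groupI)
  show ?thesis
    by unfold_locales (rule assms(2))
qed

lemma card_carrier_f2_basis: "f2_basis K bs \<Longrightarrow> card (carrier K) = 2 ^ length bs"
  unfolding f2_basis_def by (auto dest!: bij_betw_same_card simp: card_Pow)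

lemma f2_basis_length_eq: "f2_basis K xs \<Longrightarrow> f2_basis K ys \<Longrightarrow> length xs = length ys"
  using card_carrier_f2_basis[of K xs] card_carrier_f2_basis[of K ys] by simp

lemma f2_basis_length: "has_order G n \<Longrightarrow> f2_basis G xs \<Longrightarrow> length xs = n"
  unfolding has_order_def using f2_basis_length_eq by blast

context comm_group
begin

lemma f2_basis_two_element_iff:
  assumes G: "carrier G = {\<one>, E}" "E \<noteq> \<one>"
  shows "f2_basis G bs \<longleftrightarrow> bs = [E]"
proof
  assume bs: "f2_basis G bs"
  then have "2 ^ length bs = (2::nat) ^ 1"
    using card_carrier_f2_basis[OF bs] G by simp
  then obtain b where b: "bs = [b]"
    by (cases bs) (auto simp: power_inject_exp)
  have "b \<in> carrier G"
    using bs b by (simp add: f2_basis_def)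
  moreover have "finprod G ((!) bs) {0} \<noteq> finprod G ((!) bs) {}"
  proof
    assume "finprod G ((!) bs) {0} = finprod G ((!) bs) {}"
    moreover have "inj_on (\<lambda>I. finprod G ((!) bs) I) (Pow {..<length bs})"
      using bs by (simp add: f2_basis_def bij_betw_def)
    ultimately have "{0} = ({} :: nat set)"
      using b by (intro inj_onD[of "\<lambda>I. finprod G ((!) bs) I" "Pow {..<length bs}"]) auto
    then show False
      by simp
  qed
  ultimately show "bs = [E]"
    using G b by auto
next
  assume bs: "bs = [E]"
  have E: "E \<in> carrier G"
    using G by simp
  have "E \<otimes> E = \<one>"
    using m_closed[OF E E] G r_cancel_one[OF E E] by auto
  moreover have "Pow {..<length bs} = {{}, {0}}"
    using bs by (auto simp: lessThan_Suc)
  ultimately show "f2_basis G bs"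
    using G E bs by (auto simp: f2_basis_def bij_betw_def inj_on_def)
qed

lemma phi_two_element:
  assumes G: "carrier G = {\<one>, E}" "E \<noteq> \<one>"
  shows "phi G [E] \<one> = 0" "phi G [E] E = 1"
proof -
  have E: "E \<in> carrier G"
    using G by simp
  have subsets: "I \<subseteq> {..<Suc 0} \<longleftrightarrow> I = {} \<or> I = {0}" for I :: "nat set"
    by auto
  have "(THE I. I \<subseteq> {..<length [E]} \<and> finprod G ((!) [E]) I = \<one>) = {}"
    using E G(2) by (intro the_equality) (auto simp: subsets)
  then show "phi G [E] \<one> = 0"
    by (simp add: phi_def)
  have "(THE I. I \<subseteq> {..<length [E]} \<and> finprod G ((!) [E]) I = E) = {0}"
    using E G(2) by (intro the_equality) (auto simp: subsets)
  then show "phi G [E] E = 1"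
    by (simp add: phi_def)
qed

end

section \<open>The three normal forms\<close>

definition antidiagonal :: "nat \<Rightarrow> nat \<Rightarrow> nat \<Rightarrow> bool" where
  "antidiagonal n i j \<longleftrightarrow> i + j + 1 = n"

definition antidiagonal_corner :: "nat \<Rightarrow> nat \<Rightarrow> nat \<Rightarrow> bool" where
  "antidiagonal_corner n i j \<longleftrightarrow> antidiagonal n i j \<or> (i + 1 = n \<and> j + 1 = n)"

definition cyclic_antidiagonal :: "nat \<Rightarrow> nat \<Rightarrow> nat \<Rightarrow> bool" where
  "cyclic_antidiagonal n i j \<longleftrightarrow> i + j = 0 \<or> i + j = n"

definition every_column_pivot :: "nat \<Rightarrow> (nat \<Rightarrow> nat \<Rightarrow> bool) \<Rightarrow> bool" where
  "every_column_pivot n T \<longleftrightarrow> (\<forall>d<n. \<exists>j<n. T j d \<and> (\<forall>i<n. T j i \<longrightarrow> d \<le> i))"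

lemma every_column_pivot_antidiagonal: "every_column_pivot n (antidiagonal n)"
  unfolding every_column_pivot_def
proof (intro allI impI)
  fix d assume "d < n"
  then show "\<exists>j<n. antidiagonal n j d \<and> (\<forall>i<n. antidiagonal n j i \<longrightarrow> d \<le> i)"
    by (intro exI[of _ "n - 1 - d"]) (auto simp: antidiagonal_def)
qed

lemma every_column_pivot_antidiagonal_corner: "every_column_pivot n (antidiagonal_corner n)"
  unfolding every_column_pivot_def
proof (intro allI impI)
  fix d assume "d < n"
  then show "\<exists>j<n. antidiagonal_corner n j d \<and> (\<forall>i<n. antidiagonal_corner n j i \<longrightarrow> d \<le> i)"
    by (intro exI[of _ "n - 1 - d"]) (auto simp: antidiagonal_corner_def antidiagonal_def)
qed

lemma every_column_pivot_cyclic_antidiagonal: "every_column_pivot n (cyclic_antidiagonal n)"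
  unfolding every_column_pivot_def
proof (intro allI impI)
  fix d assume "d < n"
  then show "\<exists>j<n. cyclic_antidiagonal n j d \<and> (\<forall>i<n. cyclic_antidiagonal n j i \<longrightarrow> d \<le> i)"
    by (intro exI[of _ "if d = 0 then 0 else n - d"]) (auto simp: cyclic_antidiagonal_def)
qed

lemma mat_of_antidiagonal:
  "mat_of n (\<lambda>i j. of_bool (antidiagonal n i j)) = mat_of n (\<lambda>i j. if j = n - 1 - i then 1 else 0)"
  unfolding mat_of_def antidiagonal_def by (intro map_cong refl) auto

lemma mat_of_antidiagonal_corner:
  "mat_of n (\<lambda>i j. of_bool (antidiagonal_corner n i j)) = mat_of n (\<lambda>i j.
    if (i = 0 \<and> j = n - 1) \<or> (i = n - 1 \<and> j = 0) \<or> (i = n - 1 \<and> j = n - 1)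
       \<or> (1 \<le> i \<and> i \<le> n - 2 \<and> j = n - 1 - i) then 1 else 0)"
  unfolding mat_of_def antidiagonal_corner_def antidiagonal_def by (intro map_cong refl) auto

lemma mat_of_cyclic_antidiagonal:
  "mat_of n (\<lambda>i j. of_bool (cyclic_antidiagonal n i j)) = mat_of n (\<lambda>i j.
    if (i = 0 \<and> j = 0) \<or> (1 \<le> i \<and> i \<le> n - 1 \<and> j = n - i) then 1 else 0)"
  unfolding mat_of_def cyclic_antidiagonal_def by (intro map_cong refl) auto

section \<open>Symmetric bilinear forms over F2\<close>

text \<open>The field F2 is modelled by bool, with exclusive or as addition.\<close>

locale f2_form = boolean_group +
  fixes B :: "'a \<Rightarrow> 'a \<Rightarrow> bool"
  assumes form_sym: "a \<in> carrier G \<Longrightarrow> b \<in> carrier G \<Longrightarrow> B a b = B b a"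
    and form_mult: "a \<in> carrier G \<Longrightarrow> b \<in> carrier G \<Longrightarrow> c \<in> carrier G \<Longrightarrow>
      B a (b \<otimes> c) \<longleftrightarrow> B a b \<noteq> B a c"
begin

lemma form_one [simp]: "a \<in> carrier G \<Longrightarrow> \<not> B a \<one>"
  using form_mult[of a \<one> \<one>] by simp

lemma form_one_left [simp]: "a \<in> carrier G \<Longrightarrow> \<not> B \<one> a"
  using form_one form_sym by force

lemma form_mult_left:
  "a \<in> carrier G \<Longrightarrow> b \<in> carrier G \<Longrightarrow> c \<in> carrier G \<Longrightarrow> B (a \<otimes> b) c \<longleftrightarrow> B a c \<noteq> B b c"
  by (metis form_mult form_sym m_closed)

lemma form_finprod:
  assumes "a \<in> carrier G" "finite I" "f \<in> I \<rightarrow> carrier G"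
  shows "B a (finprod G f I) \<longleftrightarrow> odd (card {i\<in>I. B a (f i)})"
  using assms(2,3)
proof (induction I rule: finite_induct)
  case empty
  then show ?case
    using assms(1) by simp
next
  case (insert x I)
  have "{i \<in> insert x I. B a (f i)} =
      (if B a (f x) then insert x {i\<in>I. B a (f i)} else {i\<in>I. B a (f i)})"
    by auto
  then show ?case
    using insert assms(1) by (auto simp: form_mult)
qed

definition has_gram :: "'a list \<Rightarrow> (nat \<Rightarrow> nat \<Rightarrow> bool) \<Rightarrow> bool" where
  "has_gram xs T \<longleftrightarrow> (\<forall>i<length xs. \<forall>j<length xs. B (xs ! i) (xs ! j) = T i j)"

definition gram_lex_ge :: "'a list \<Rightarrow> (nat \<Rightarrow> nat \<Rightarrow> bool) \<Rightarrow> bool" where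
  "gram_lex_ge xs T \<longleftrightarrow> (\<forall>i<length xs. \<forall>j<length xs.
     (\<forall>i'<i. \<forall>j'<length xs. B (xs ! i') (xs ! j') = T i' j') \<longrightarrow>
     (\<forall>j'<j. B (xs ! i) (xs ! j') = T i j') \<longrightarrow> T i j \<longrightarrow> B (xs ! i) (xs ! j))"

definition gram_matrix :: "'a list \<Rightarrow> nat list list" where
  "gram_matrix xs = mat_of (length xs) (\<lambda>i j. of_bool (B (xs ! i) (xs ! j)))"

lemma gram_matrix_eq: "has_gram xs T \<Longrightarrow> gram_matrix xs = mat_of (length xs) (\<lambda>i j. of_bool (T i j))"
  unfolding has_gram_def gram_matrix_def mat_of_def by (intro map_cong refl) auto

lemma gram_lex_geI:
  assumes "set xs \<subseteq> carrier G" "\<And>i j. T i j = T j i"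
    and upper: "\<And>i j. i \<le> j \<Longrightarrow> j < length xs \<Longrightarrow>
      (\<forall>i'<i. \<forall>j'<length xs. B (xs ! i') (xs ! j') = T i' j') \<Longrightarrow>
      (\<forall>j'<j. B (xs ! i) (xs ! j') = T i j') \<Longrightarrow> T i j \<Longrightarrow> B (xs ! i) (xs ! j)"
  shows "gram_lex_ge xs T"
  unfolding gram_lex_ge_def
proof (intro allI impI)
  fix i j
  assume ij: "i < length xs" "j < length xs"
    and rows: "\<forall>i'<i. \<forall>j'<length xs. B (xs ! i') (xs ! j') = T i' j'"
    and row: "\<forall>j'<j. B (xs ! i) (xs ! j') = T i j'" and "T i j"
  show "B (xs ! i) (xs ! j)"
  proof (cases "j < i")
    case True
    then show ?thesis
      using rows ij assms(1,2) \<open>T i j\<close> form_sym nth_mem by (metis subsetD)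
  next
    case False
    then show ?thesis
      using upper rows row ij \<open>T i j\<close> by simp
  qed
qed

lemma gram_matrix_ge:
  assumes "gram_lex_ge xs T"
  shows "mat_of (length xs) (\<lambda>i j. of_bool (T i j)) \<le> gram_matrix xs"
  unfolding gram_matrix_def
proof (rule mat_of_le)
  fix i j
  assume ij: "i < length xs" "j < length xs"
    and rows: "\<forall>i'<i. \<forall>j'<length xs. of_bool (T i' j') = (of_bool (B (xs ! i') (xs ! j')) :: nat)"
    and row: "\<forall>j'<j. of_bool (T i j') = (of_bool (B (xs ! i) (xs ! j')) :: nat)"
  have "\<forall>i'<i. \<forall>j'<length xs. B (xs ! i') (xs ! j') = T i' j'"
    using rows by (simp add: of_bool_eq_iff)
  moreover have "\<forall>j'<j. B (xs ! i) (xs ! j') = T i j'"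
    using row by (simp add: of_bool_eq_iff)
  ultimately have "T i j \<longrightarrow> B (xs ! i) (xs ! j)"
    using assms ij unfolding gram_lex_ge_def by blast
  then show "(of_bool (T i j) :: nat) \<le> of_bool (B (xs ! i) (xs ! j))"
    by simp
qed

lemma finprod_ne_one_if_every_column_pivot:
  assumes xs: "set xs \<subseteq> carrier G" "has_gram xs T" "every_column_pivot (length xs) T"
    and D: "D \<subseteq> {..<length xs}" "D \<noteq> {}"
  shows "finprod G ((!) xs) D \<noteq> \<one>"
proof -
  let ?n = "length xs"
  have fin: "finite D"
    using D(1) finite_subset by blast
  define d where "d = Max D"
  have d: "d \<in> D" "\<And>i. i \<in> D \<Longrightarrow> i \<le> d"
    using fin D(2) by (simp_all add: d_def)
  then obtain j where j: "j < ?n" "T j d" "\<And>i. i < ?n \<Longrightarrow> T j i \<Longrightarrow> d \<le> i"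
    using xs(3) D(1) by (auto simp: every_column_pivot_def)
  have "i = d" if "i \<in> D" "T j i" for i
    using d(2)[OF that(1)] j(3)[OF _ that(2)] that(1) D(1) by force
  moreover have "B (xs ! j) (xs ! i) \<longleftrightarrow> T j i" if "i \<in> D" for i
    using xs(2) j(1) that D(1) by (auto simp: has_gram_def)
  ultimately have single: "{i\<in>D. B (xs ! j) (xs ! i)} = {d}"
    using d(1) j(2) by blast
  have xj: "xs ! j \<in> carrier G"
    using xs(1) j(1) nth_mem by blast
  have "(!) xs \<in> D \<rightarrow> carrier G"
    using xs(1) D(1) nth_mem by (fastforce simp: Pi_iff)
  then have "B (xs ! j) (finprod G ((!) xs) D)"
    using form_finprod[OF xj fin] by (simp add: single)
  then show ?thesis
    using xj by auto
qed

lemma f2_basis_if_every_column_pivot: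
  assumes xs: "set xs \<subseteq> carrier G" "card (carrier G) = 2 ^ length xs" "has_gram xs T"
    "every_column_pivot (length xs) T"
  shows "f2_basis G xs"
proof -
  let ?n = "length xs"
  let ?prod = "\<lambda>I. finprod G ((!) xs) I"
  have nth_closed: "(!) xs \<in> I \<rightarrow> carrier G" if "I \<subseteq> {..<?n}" for I
    using xs(1) that nth_mem by (fastforce simp: Pi_iff)
  have "I = J" if IJ: "I \<subseteq> {..<?n}" "J \<subseteq> {..<?n}" "?prod I = ?prod J" for I J
  proof -
    have "finite I" "finite J"
      using IJ finite_subset by blast+
    then have "?prod (sym_diff I J) = ?prod I \<otimes> ?prod J"
      using nth_closed[of "I \<union> J"] IJ(1,2) by (intro finprod_symdiff[symmetric]) auto
    also have "\<dots> = \<one>"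
      using IJ(3) square_eq_one finprod_closed[OF nth_closed[OF IJ(2)]] by simp
    finally show "I = J"
      using finprod_ne_one_if_every_column_pivot[OF xs(1,3,4), of "sym_diff I J"] IJ by blast
  qed
  then have inj: "inj_on ?prod (Pow {..<?n})"
    by (intro inj_onI) simp
  have "finite (carrier G)"
    using xs(2) card_ge_0_finite by force
  then have "?prod ` Pow {..<?n} = carrier G"
    using inj xs(2) nth_closed by (intro card_subset_eq) (auto simp: card_image card_Pow)
  then show ?thesis
    using inj xs(1) square_eq_one by (simp add: f2_basis_def bij_betw_def)
qed

lemma orthogonal_if_orthogonal_f2_basis:
  assumes "f2_basis G xs" "w \<in> carrier G" "\<And>i. i < length xs \<Longrightarrow> \<not> B w (xs ! i)"
    and "g \<in> carrier G"
  shows "\<not> B w g"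
proof -
  have "g \<in> (\<lambda>I. finprod G ((!) xs) I) ` Pow {..<length xs}"
    using assms(1,4) by (simp add: f2_basis_def bij_betw_def)
  then obtain I where I: "I \<subseteq> {..<length xs}" "g = finprod G ((!) xs) I"
    by blast
  then have "(!) xs \<in> I \<rightarrow> carrier G"
    using assms(1) nth_mem by (fastforce simp: f2_basis_def Pi_iff)
  moreover have "finite I"
    using I finite_subset by blast
  moreover have no_terms: "{i\<in>I. B w (xs ! i)} = {}"
    using I assms(3) by auto
  ultimately show ?thesis
    using form_finprod[of w I] I(2) assms(2) by (simp add: no_terms)
qed

definition perp :: "'a set \<Rightarrow> 'a \<Rightarrow> 'a set" where
  "perp W x = {w\<in>W. \<not> B w x}"

definition nondegenerate_on :: "'a set \<Rightarrow> bool" where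
  "nondegenerate_on W \<longleftrightarrow> (\<forall>w\<in>W. w \<noteq> \<one> \<longrightarrow> (\<exists>x\<in>W. B w x))"

lemma subgroup_perp: "subgroup W G \<Longrightarrow> x \<in> carrier G \<Longrightarrow> subgroup (perp W x) G"
  by (auto simp: subgroup_iff_closed perp_def form_mult_left subset_iff)

lemma card_perp:
  assumes W: "subgroup W G" "finite W" and "x \<in> carrier G" "y \<in> W" "B y x"
  shows "card W = 2 * card (perp W x)"
proof -
  have carr: "W \<subseteq> carrier G"
    using W by (simp add: subgroup_iff_closed)
  have "W - perp W x = (\<otimes>) y ` perp W x"
  proof
    show "(\<otimes>) y ` perp W x \<subseteq> W - perp W x"
      using assms carr by (auto simp: perp_def form_mult_left subgroup_iff_closed subset_iff)
    show "W - perp W x \<subseteq> (\<otimes>) y ` perp W x"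
    proof
      fix w assume "w \<in> W - perp W x"
      then have "y \<otimes> w \<in> perp W x" "w = y \<otimes> (y \<otimes> w)"
        using assms carr by (auto simp: perp_def form_mult_left subgroup_iff_closed subset_iff)
      then show "w \<in> (\<otimes>) y ` perp W x"
        by blast
    qed
  qed
  moreover have "inj_on ((\<otimes>) y) (perp W x)"
    using assms carr by (intro inj_onI) (auto simp: perp_def subset_iff)
  moreover have "card W = card (perp W x) + card (W - perp W x)"
    using W(2) by (simp add: card_Diff_subset perp_def card_mono)
  ultimately show ?thesis
    by (simp add: card_image)
qed

lemma perp_projection:
  assumes W: "subgroup W G" and "x \<in> carrier G" "y \<in> W" "B y x" "w \<in> W"
  shows "\<exists>w'\<in>perp W x. \<forall>a\<in>carrier G. \<not> B a y \<longrightarrow> B a w' = B a w"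
proof -
  have carr: "W \<subseteq> carrier G" and closed: "\<And>a b. a \<in> W \<Longrightarrow> b \<in> W \<Longrightarrow> a \<otimes> b \<in> W"
    using W by (simp_all add: subgroup_iff_closed)
  show ?thesis
  proof (cases "B w x")
    case True
    then have "y \<otimes> w \<in> perp W x"
      using assms carr closed by (auto simp: perp_def form_mult_left subset_iff)
    then show ?thesis
      using assms carr by (intro bexI[of _ "y \<otimes> w"]) (auto simp: form_mult subset_iff)
  next
    case False
    then show ?thesis
      using assms(5) by (auto simp: perp_def)
  qed
qed

lemma nondegenerate_on_perp:
  assumes W: "subgroup W G" "nondegenerate_on W" and u: "u \<in> W" "B u u"
  shows "nondegenerate_on (perp W u)"
  unfolding nondegenerate_on_def
proof (intro ballI impI)
  fix w assume w: "w \<in> perp W u" "w \<noteq> \<one>"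
  have carr: "W \<subseteq> carrier G"
    using W by (simp add: subgroup_iff_closed)
  obtain x where x: "x \<in> W" "B w x"
    using W(2) w by (auto simp: nondegenerate_on_def perp_def)
  obtain x' where "x' \<in> perp W u" "\<forall>a\<in>carrier G. \<not> B a u \<longrightarrow> B a x' = B a x"
    using perp_projection[OF W(1) _ u(1) u(2) x(1)] u(1) carr by blast
  then show "\<exists>x\<in>perp W u. B w x"
    using w(1) x(2) carr by (auto simp: perp_def)
qed

lemma nondegenerate_on_perp_perp:
  assumes W: "subgroup W G" "nondegenerate_on W"
    and uv: "u \<in> W" "v \<in> W" "B u v" "\<not> B u u"
  shows "nondegenerate_on (perp (perp W u) v)"
  unfolding nondegenerate_on_def
proof (intro ballI impI)
  fix w assume w: "w \<in> perp (perp W u) v" "w \<noteq> \<one>"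
  have carr: "W \<subseteq> carrier G"
    using W by (simp add: subgroup_iff_closed)
  obtain x where x: "x \<in> W" "B w x"
    using W(2) w by (auto simp: nondegenerate_on_def perp_def)
  have "B v u"
    using uv carr form_sym by blast
  then obtain x1 where x1: "x1 \<in> perp W u" "\<forall>a\<in>carrier G. \<not> B a v \<longrightarrow> B a x1 = B a x"
    using perp_projection[OF W(1) _ uv(2) _ x(1)] uv(1) carr by blast
  have "u \<in> perp W u"
    using uv by (simp add: perp_def)
  then obtain x2 where "x2 \<in> perp (perp W u) v" "\<forall>a\<in>carrier G. \<not> B a u \<longrightarrow> B a x2 = B a x1"
    using perp_projection[OF subgroup_perp[OF W(1)] _ _ uv(3) x1(1)] uv carr by blast
  then show "\<exists>x\<in>perp (perp W u) v. B w x"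
    using w(1) x(2) x1(2) carr by (auto simp: perp_def)
qed

lemma anisotropic_complement:
  assumes W: "subgroup W G" "finite W" "nondegenerate_on W" and u: "u \<in> W" "B u u"
  shows "subgroup (perp W u) G" "perp W u \<subseteq> W" "card W = 2 * card (perp W u)"
    "nondegenerate_on (perp W u)"
proof -
  have "u \<in> carrier G"
    using W(1) u(1) by (auto simp: subgroup_iff_closed)
  then show "subgroup (perp W u) G" "card W = 2 * card (perp W u)"
    using subgroup_perp[OF W(1)] card_perp[OF W(1,2) _ u(1,2)] by simp_all
  show "perp W u \<subseteq> W"
    by (simp add: perp_def)
  show "nondegenerate_on (perp W u)"
    using nondegenerate_on_perp[OF W(1,3) u] .
qed

lemma hyperbolic_complement:
  assumes W: "subgroup W G" "finite W" "nondegenerate_on W"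
    and uv: "u \<in> W" "v \<in> W" "B u v" "\<not> B u u"
  shows "subgroup (perp (perp W u) v) G" "perp (perp W u) v \<subseteq> W"
    "card W = 4 * card (perp (perp W u) v)" "nondegenerate_on (perp (perp W u) v)"
proof -
  have carr: "u \<in> carrier G" "v \<in> carrier G"
    using W(1) uv(1,2) by (auto simp: subgroup_iff_closed)
  then show "subgroup (perp (perp W u) v) G"
    using subgroup_perp[OF subgroup_perp[OF W(1)]] by simp
  show "perp (perp W u) v \<subseteq> W"
    by (auto simp: perp_def)
  have "B v u"
    using uv(3) carr form_sym by blast
  then have "card W = 2 * card (perp W u)"
    using card_perp[OF W(1,2) carr(1) uv(2)] by simp
  moreover have "u \<in> perp W u" "finite (perp W u)"
    using uv W(2) by (auto simp: perp_def)
  then have "card (perp W u) = 2 * card (perp (perp W u) v)"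
    using card_perp[OF subgroup_perp[OF W(1) carr(1)] _ carr(2) _ uv(3)] by simp
  ultimately show "card W = 4 * card (perp (perp W u) v)"
    by simp
  show "nondegenerate_on (perp (perp W u) v)"
    using nondegenerate_on_perp_perp[OF W(1,3) uv] .
qed

lemma has_gram_border:
  assumes xs: "has_gram xs (antidiagonal (length xs))" "set xs \<subseteq> carrier G"
    and uv: "u \<in> carrier G" "v \<in> carrier G" "B u v" "\<not> B u u"
    and orth: "\<And>x. x \<in> set xs \<Longrightarrow> \<not> B x u \<and> \<not> B x v"
  shows "has_gram (u # xs @ [v])
    (\<lambda>i j. antidiagonal (length xs + 2) i j \<or> (i = length xs + 1 \<and> j = length xs + 1 \<and> B v v))"
proof -
  let ?k = "length xs"
  have inner: "B (xs ! i) (xs ! j) \<longleftrightarrow> i + j + 1 = ?k" if "i < ?k" "j < ?k" for i j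
    using xs(1) that by (simp add: has_gram_def antidiagonal_def)
  have side: "\<not> B (xs ! i) u" "\<not> B u (xs ! i)" "\<not> B (xs ! i) v" "\<not> B v (xs ! i)" if "i < ?k" for i
    using orth[OF nth_mem[OF that]] xs(2) nth_mem[OF that] uv(1,2) form_sym by blast+
  have "B v u"
    using uv form_sym by blast
  then show ?thesis
    unfolding has_gram_def using uv(3,4)
    by (auto simp: nth_Cons_snoc antidiagonal_def inner side)
qed

lemma has_gram_cons:
  assumes xs: "has_gram xs (antidiagonal (length xs))" "set xs \<subseteq> carrier G"
    and u: "u \<in> carrier G" "B u u" and orth: "\<And>x. x \<in> set xs \<Longrightarrow> \<not> B x u"
  shows "has_gram (u # xs) (cyclic_antidiagonal (length xs + 1))"
proof -
  let ?k = "length xs"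
  have inner: "B (xs ! i) (xs ! j) \<longleftrightarrow> i + j + 1 = ?k" if "i < ?k" "j < ?k" for i j
    using xs(1) that by (simp add: has_gram_def antidiagonal_def)
  have side: "\<not> B (xs ! i) u" "\<not> B u (xs ! i)" if "i < ?k" for i
    using orth[OF nth_mem[OF that]] xs(2) nth_mem[OF that] u(1) form_sym by blast+
  show ?thesis
    unfolding has_gram_def using u(2)
    by (auto simp: nth_Cons' cyclic_antidiagonal_def inner side)
qed

lemma symplectic_basis:
  assumes "subgroup W G" "finite W" "\<And>w. w \<in> W \<Longrightarrow> \<not> B w w" "nondegenerate_on W"
  shows "\<exists>xs. set xs \<subseteq> W \<and> card W = 2 ^ length xs \<and> even (length xs)
    \<and> has_gram xs (antidiagonal (length xs))"
  using assms
proof (induction "card W" arbitrary: W rule: less_induct)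
  case less
  have carr: "W \<subseteq> carrier G" and one: "\<one> \<in> W"
    using less.prems(1) by (simp_all add: subgroup_iff_closed)
  show ?case
  proof (cases "W = {\<one>}")
    case True
    then show ?thesis
      by (intro exI[of _ "[]"]) (simp add: has_gram_def)
  next
    case False
    then obtain u where u: "u \<in> W" "u \<noteq> \<one>"
      using one by blast
    then obtain v where v: "v \<in> W" "B u v"
      using less.prems(4) by (auto simp: nondegenerate_on_def)
    define W' where "W' = perp (perp W u) v"
    have uu: "\<not> B u u"
      using less.prems(3) u by blast
    note W' = hyperbolic_complement[OF less.prems(1,2,4) u(1) v uu, folded W'_def]
    have "finite W'"
      using W'(2) less.prems(2) finite_subset by blast
    then have "card W' > 0"
      using W'(1) by (auto simp: card_gt_0_iff subgroup_iff_closed)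
    then have "card W' < card W"
      using W'(3) by simp
    then obtain xs where xs: "set xs \<subseteq> W'" "card W' = 2 ^ length xs" "even (length xs)"
        "has_gram xs (antidiagonal (length xs))"
      using less.hyps[of W'] less.prems(3) W' \<open>finite W'\<close> by blast
    have "has_gram (u # xs @ [v]) (antidiagonal (length (u # xs @ [v])))"
      using has_gram_border[OF xs(4) _ _ _ v(2) uu] xs(1) u(1) v(1) carr less.prems(3)
      by (auto simp: W'_def perp_def)
    then show ?thesis
      using xs(1-3) u(1) v(1) W'(2,3) by (intro exI[of _ "u # xs @ [v]"]) auto
  qed
qed

end

section \<open>Nondegenerate forms with a characteristic element\<close>

locale characteristic_form = f2_form +
  fixes m
  assumes finite_carrier: "finite (carrier G)"
    and form_nondegenerate: "a \<in> carrier G \<Longrightarrow> a \<noteq> \<one> \<Longrightarrow> \<exists>x\<in>carrier G. B a x"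
    and characteristic_closed: "m \<in> carrier G"
    and form_diag: "a \<in> carrier G \<Longrightarrow> B a a = B a m"
begin

lemma nondegenerate_carrier: "nondegenerate_on (carrier G)"
  using form_nondegenerate by (simp add: nondegenerate_on_def)

lemma f2_basis_antidiagonal:
  assumes "m = \<one>"
  shows "\<exists>xs. f2_basis G xs \<and> even (length xs) \<and> has_gram xs (antidiagonal (length xs))"
proof -
  obtain xs where xs: "set xs \<subseteq> carrier G" "card (carrier G) = 2 ^ length xs" "even (length xs)"
      "has_gram xs (antidiagonal (length xs))"
    using symplectic_basis[OF subgroup_self finite_carrier _ nondegenerate_carrier]
      form_diag assms by auto
  have "f2_basis G xs"
    using f2_basis_if_every_column_pivot[OF xs(1,2,4) every_column_pivot_antidiagonal] .
  with xs show ?thesis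
    by blast
qed

lemma f2_basis_antidiagonal_corner:
  assumes "m \<noteq> \<one>" "\<not> B m m"
  shows "\<exists>xs. f2_basis G xs \<and> xs \<noteq> [] \<and> xs ! 0 = m \<and> even (length xs)
    \<and> has_gram xs (antidiagonal_corner (length xs))"
proof -
  obtain v where v: "v \<in> carrier G" "B m v"
    using nondegenerate_carrier assms(1) characteristic_closed by (auto simp: nondegenerate_on_def)
  have vv: "B v v"
    using v characteristic_closed form_diag form_sym by blast
  define W where "W = perp (perp (carrier G) m) v"
  note W = hyperbolic_complement[OF subgroup_self finite_carrier nondegenerate_carrier
      characteristic_closed v assms(2), folded W_def]
  have "\<not> B w w" if "w \<in> W" for w
    using that form_diag by (auto simp: W_def perp_def)
  moreover have "finite W"
    using W(2) finite_carrier finite_subset by blast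
  ultimately obtain xs where xs: "set xs \<subseteq> W" "card W = 2 ^ length xs" "even (length xs)"
      "has_gram xs (antidiagonal (length xs))"
    using symplectic_basis[OF W(1)] W(4) by blast
  define ys where "ys = m # xs @ [v]"
  have ys: "set ys \<subseteq> carrier G" "length ys = length xs + 2"
    using xs(1) W(2) v(1) characteristic_closed by (auto simp: ys_def)
  have "card (carrier G) = 2 ^ length ys"
    using W(3) xs(2) ys(2) by simp
  moreover have gram: "has_gram ys (antidiagonal_corner (length ys))"
    using has_gram_border[OF xs(4) _ characteristic_closed v assms(2)] xs(1) W(2) vv
    by (auto simp: ys_def W_def perp_def has_gram_def antidiagonal_corner_def)
  ultimately have "f2_basis G ys"
    using f2_basis_if_every_column_pivot[OF ys(1)] every_column_pivot_antidiagonal_corner by blast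
  then show ?thesis
    using gram xs(3) ys(2) by (intro exI[of _ ys]) (simp add: ys_def)
qed

lemma f2_basis_cyclic_antidiagonal:
  assumes "B m m"
  shows "\<exists>xs. f2_basis G xs \<and> xs \<noteq> [] \<and> xs ! 0 = m \<and> odd (length xs)
    \<and> has_gram xs (cyclic_antidiagonal (length xs))"
proof -
  define W where "W = perp (carrier G) m"
  note W = anisotropic_complement[OF subgroup_self finite_carrier nondegenerate_carrier
      characteristic_closed assms, folded W_def]
  have "\<not> B w w" if "w \<in> W" for w
    using that form_diag by (auto simp: W_def perp_def)
  moreover have "finite W"
    using W(2) finite_carrier finite_subset by blast
  ultimately obtain xs where xs: "set xs \<subseteq> W" "card W = 2 ^ length xs" "even (length xs)"
      "has_gram xs (antidiagonal (length xs))"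
    using symplectic_basis[OF W(1)] W(4) by blast
  define ys where "ys = m # xs"
  have ys: "set ys \<subseteq> carrier G" "length ys = length xs + 1"
    using xs(1) W(2) characteristic_closed by (auto simp: ys_def)
  have "card (carrier G) = 2 ^ length ys"
    using W(3) xs(2) ys(2) by simp
  moreover have gram: "has_gram ys (cyclic_antidiagonal (length ys))"
    using has_gram_cons[OF xs(4) _ characteristic_closed assms] xs(1) W(2)
    by (auto simp: ys_def W_def perp_def)
  ultimately have "f2_basis G ys"
    using f2_basis_if_every_column_pivot[OF ys(1)] every_column_pivot_cyclic_antidiagonal by blast
  then show ?thesis
    using gram xs(3) ys(2) by (intro exI[of _ ys]) (simp add: ys_def)
qed

text \<open>If rows \<open>k < i\<close> have their single 1 in column \<open>\<sigma> k\<close>, adding to row \<open>i\<close> the rows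
  \<open>k \<in> K\<close> clears its entries in these columns.\<close>

lemma cleared_row_orthogonal:
  assumes xs: "set xs \<subseteq> carrier G" "i < length xs" "c < length xs"
    and \<sigma>: "inj_on \<sigma> {..<i}" "\<And>k. k < i \<Longrightarrow> \<sigma> k < length xs"
    and rows: "\<And>k c. k < i \<Longrightarrow> c < length xs \<Longrightarrow> B (xs ! k) (xs ! c) \<longleftrightarrow> c = \<sigma> k"
    and old_only: "\<And>c. c < length xs \<Longrightarrow> c \<notin> \<sigma> ` {..<i} \<Longrightarrow> \<not> B (xs ! i) (xs ! c)"
  defines "K \<equiv> {k. k < i \<and> B (xs ! i) (xs ! \<sigma> k)}"
  shows "\<not> B (xs ! c) (finprod G ((!) xs) (insert i K))"
proof -
  have carr: "xs ! k \<in> carrier G" if "k < length xs" for k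
    using xs(1) nth_mem[OF that] by auto
  have K: "finite K" "i \<notin> K" "(!) xs \<in> insert i K \<rightarrow> carrier G"
    using xs(2) carr by (auto simp: K_def)
  have "B (xs ! c) (xs ! k) \<longleftrightarrow> \<sigma> k = c" if "k \<in> K" for k
    using rows[of k c] that xs carr form_sym by (auto simp: K_def)
  moreover have "B (xs ! c) (xs ! i) = B (xs ! i) (xs ! c)"
    using xs carr form_sym by blast
  ultimately have terms: "{k \<in> insert i K. B (xs ! c) (xs ! k)} =
      (if B (xs ! i) (xs ! c) then insert i {k\<in>K. \<sigma> k = c} else {k\<in>K. \<sigma> k = c})"
    by auto
  have "card {k\<in>K. \<sigma> k = c} = of_bool (B (xs ! i) (xs ! c))"
  proof (cases "c \<in> \<sigma> ` {..<i}")
    case True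
    then obtain k0 where "k0 < i" "c = \<sigma> k0"
      by blast
    then have "{k\<in>K. \<sigma> k = c} = (if B (xs ! i) (xs ! c) then {k0} else {})"
      using \<sigma>(1) by (auto simp: K_def inj_on_def)
    then show ?thesis
      by simp
  next
    case False
    then have none: "{k\<in>K. \<sigma> k = c} = {}"
      by (auto simp: K_def)
    show ?thesis
      using old_only[OF xs(3) False] by (simp add: none)
  qed
  then have "even (card {k \<in> insert i K. B (xs ! c) (xs ! k)})"
    unfolding terms using K(1,2) by simp
  then show ?thesis
    using form_finprod[OF carr[OF xs(3)] _ K(3)] K(1) by simp
qed

lemma exists_new_pivot:
  assumes xs: "f2_basis G xs" "i < length xs"
    and \<sigma>: "inj_on \<sigma> {..<i}" "\<And>k. k < i \<Longrightarrow> \<sigma> k < length xs"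
    and rows: "\<And>k c. k < i \<Longrightarrow> c < length xs \<Longrightarrow> B (xs ! k) (xs ! c) \<longleftrightarrow> c = \<sigma> k"
  shows "\<exists>c<length xs. c \<notin> \<sigma> ` {..<i} \<and> B (xs ! i) (xs ! c)"
proof (rule ccontr)
  assume "\<not> ?thesis"
  then have old_only: "\<And>c. c < length xs \<Longrightarrow> c \<notin> \<sigma> ` {..<i} \<Longrightarrow> \<not> B (xs ! i) (xs ! c)"
    by blast
  have carr: "set xs \<subseteq> carrier G"
    using xs(1) by (simp add: f2_basis_def)
  define K where "K = {k. k < i \<and> B (xs ! i) (xs ! \<sigma> k)}"
  define w where "w = finprod G ((!) xs) (insert i K)"
  have K: "insert i K \<subseteq> {..<length xs}"
    using xs(2) \<sigma>(2) by (auto simp: K_def)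
  then have w: "w \<in> carrier G"
    using carr nth_mem by (fastforce simp: w_def intro: finprod_closed)
  have "\<not> B w (xs ! c)" if c: "c < length xs" for c
  proof -
    have "\<not> B (xs ! c) w"
      using cleared_row_orthogonal[OF carr xs(2) c \<sigma> rows old_only] unfolding w_def K_def .
    moreover have "xs ! c \<in> carrier G"
      using carr c nth_mem by blast
    ultimately show ?thesis
      using form_sym w by blast
  qed
  then have "w = \<one>"
    using orthogonal_if_orthogonal_f2_basis[OF xs(1) w] nondegenerate_carrier w by (auto simp: nondegenerate_on_def)
  moreover have "inj_on (\<lambda>I. finprod G ((!) xs) I) (Pow {..<length xs})"
    using xs(1) by (simp add: f2_basis_def bij_betw_def)
  ultimately have "insert i K = {}"
    using K by (intro inj_onD[of "\<lambda>I. finprod G ((!) xs) I" "Pow {..<length xs}"]) (simp_all add: w_def)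
  then show False
    by simp
qed

lemma pivot_forced:
  assumes "f2_basis G xs" "i \<le> j" "j < length xs"
    and "inj_on \<sigma> {..<i}" "\<And>k. k < i \<Longrightarrow> \<sigma> k < length xs"
    and "\<And>k c. k < i \<Longrightarrow> c < length xs \<Longrightarrow> B (xs ! k) (xs ! c) \<longleftrightarrow> c = \<sigma> k"
    and "\<And>c. c < j \<Longrightarrow> \<not> B (xs ! i) (xs ! c)"
    and "\<And>c. j < c \<Longrightarrow> c < length xs \<Longrightarrow> c \<in> \<sigma> ` {..<i}"
  shows "B (xs ! i) (xs ! j)"
  using exists_new_pivot[OF assms(1) _ assms(4-6)] assms(2,3,7,8)
  by (metis linorder_neqE_nat order_le_less_trans)

lemma gram_lex_ge_antidiagonal:
  assumes xs: "f2_basis G xs"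
  shows "gram_lex_ge xs (antidiagonal (length xs))"
proof (rule gram_lex_geI)
  show "set xs \<subseteq> carrier G"
    using xs by (simp add: f2_basis_def)
  fix i j
  let ?n = "length xs"
  assume ij: "i \<le> j" "j < ?n"
    and rows: "\<forall>i'<i. \<forall>j'<?n. B (xs ! i') (xs ! j') = antidiagonal ?n i' j'"
    and row: "\<forall>j'<j. B (xs ! i) (xs ! j') = antidiagonal ?n i j'"
    and "antidiagonal ?n i j"
  then have j: "j = ?n - 1 - i"
    by (simp add: antidiagonal_def)
  show "B (xs ! i) (xs ! j)"
  proof (rule pivot_forced[OF xs ij, where \<sigma> = "\<lambda>k. ?n - 1 - k"])
    show "c \<in> (\<lambda>k. ?n - 1 - k) ` {..<i}" if "j < c" "c < ?n" for c
      using that j by (intro image_eqI[of _ _ "?n - 1 - c"]) auto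
  qed (use ij j rows row in \<open>auto simp: antidiagonal_def inj_on_def\<close>)
qed (auto simp: antidiagonal_def)

lemma gram_lex_ge_antidiagonal_corner:
  assumes xs: "f2_basis G xs" and m: "xs \<noteq> []" "xs ! 0 = m"
  shows "gram_lex_ge xs (antidiagonal_corner (length xs))"
proof (rule gram_lex_geI)
  show carr: "set xs \<subseteq> carrier G"
    using xs by (simp add: f2_basis_def)
  fix i j
  let ?n = "length xs"
  assume ij: "i \<le> j" "j < ?n"
    and rows: "\<forall>i'<i. \<forall>j'<?n. B (xs ! i') (xs ! j') = antidiagonal_corner ?n i' j'"
    and row: "\<forall>j'<j. B (xs ! i) (xs ! j') = antidiagonal_corner ?n i j'"
    and T: "antidiagonal_corner ?n i j"
  show "B (xs ! i) (xs ! j)"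
  proof (cases "antidiagonal ?n i j")
    case True
    then have j: "j = ?n - 1 - i"
      by (simp add: antidiagonal_def)
    show ?thesis
    proof (rule pivot_forced[OF xs ij, where \<sigma> = "\<lambda>k. ?n - 1 - k"])
      show "c \<in> (\<lambda>k. ?n - 1 - k) ` {..<i}" if "j < c" "c < ?n" for c
        using that j by (intro image_eqI[of _ _ "?n - 1 - c"]) auto
    qed (use ij j rows row in \<open>auto simp: antidiagonal_corner_def antidiagonal_def inj_on_def\<close>)
  next
    case False
    then have i: "i = ?n - 1" "j = i" "0 < j"
      using T ij by (auto simp: antidiagonal_corner_def antidiagonal_def)
    then have "B (xs ! i) (xs ! 0)"
      using row by (auto simp: antidiagonal_corner_def antidiagonal_def)
    then show ?thesis
      using i ij carr m form_diag nth_mem by (metis subsetD)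
  qed
qed (auto simp: antidiagonal_corner_def antidiagonal_def)

lemma gram_lex_ge_cyclic_antidiagonal:
  assumes xs: "f2_basis G xs" and m: "xs \<noteq> []" "xs ! 0 = m" "B m m"
  shows "gram_lex_ge xs (cyclic_antidiagonal (length xs))"
proof (rule gram_lex_geI)
  show carr: "set xs \<subseteq> carrier G"
    using xs by (simp add: f2_basis_def)
  fix i j
  let ?n = "length xs"
  let ?\<sigma> = "\<lambda>k. if k = 0 then 0 else ?n - k"
  assume ij: "i \<le> j" "j < ?n"
    and rows: "\<forall>i'<i. \<forall>j'<?n. B (xs ! i') (xs ! j') = cyclic_antidiagonal ?n i' j'"
    and row: "\<forall>j'<j. B (xs ! i) (xs ! j') = cyclic_antidiagonal ?n i j'"
    and T: "cyclic_antidiagonal ?n i j"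
  show "B (xs ! i) (xs ! j)"
  proof (cases "i = 0")
    case True
    then show ?thesis
      using T ij m by (auto simp: cyclic_antidiagonal_def)
  next
    case False
    then have j: "j = ?n - i"
      using T ij by (auto simp: cyclic_antidiagonal_def)
    show ?thesis
    proof (rule pivot_forced[OF xs ij, where \<sigma> = ?\<sigma>])
      show "c \<in> ?\<sigma> ` {..<i}" if "j < c" "c < ?n" for c
        using that j by (intro image_eqI[of _ _ "?n - c"]) auto
    qed (use ij j rows row False in \<open>auto simp: cyclic_antidiagonal_def inj_on_def\<close>)
  qed
qed (auto simp: cyclic_antidiagonal_def)

end

section \<open>Quaternionic structures of local type\<close>

locale local_quaternionic =
  fixes G :: "'a monoid" (structure) and m :: 'a and q :: "'a \<Rightarrow> 'a \<Rightarrow> 'b" and z e :: 'b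
  assumes local_type: "local_type G m q z"
    and quats_eq: "quats G q = {z, e}" and e_neq_z: "e \<noteq> z"
begin

lemma is_quat_struct: "quat_struct G m q z"
  using local_type by (simp add: local_type_def)

lemma q_in_quats: "a \<in> carrier G \<Longrightarrow> b \<in> carrier G \<Longrightarrow> q a b \<in> quats G q"
  by (auto simp: quats_def)

lemma q_cases: "a \<in> carrier G \<Longrightarrow> b \<in> carrier G \<Longrightarrow> q a b = z \<or> q a b = e"
  using q_in_quats quats_eq by blast

lemma q_mult:
  assumes "a \<in> carrier G" "b \<in> carrier G" "c \<in> carrier G"
  shows "q a (b \<otimes> c) \<noteq> z \<longleftrightarrow> (q a b \<noteq> z) \<noteq> (q a c \<noteq> z)"
proof -
  have "q a b = q a c \<longleftrightarrow> q a (b \<otimes> c) = z"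
    using is_quat_struct assms unfolding quat_struct_def by blast
  moreover have "q a b = z \<or> q a b = e" "q a c = z \<or> q a c = e"
    using q_cases assms by blast+
  ultimately show ?thesis
    using e_neq_z by metis
qed

text \<open>(Q1), i.e. \<open>q a (m \<otimes> a) = z\<close>, makes \<open>m = -1\<close> a characteristic element of the form.\<close>

sublocale characteristic_form G "\<lambda>a b. q a b \<noteq> z" m
proof -
  interpret boolean_group G
    using is_quat_struct by (intro boolean_groupI) (simp_all add: quat_struct_def)
  have m: "m \<in> carrier G" and q1: "\<And>a. a \<in> carrier G \<Longrightarrow> q a (m \<otimes> a) = z"
    using is_quat_struct by (simp_all add: quat_struct_def)
  show "characteristic_form G (\<lambda>a b. q a b \<noteq> z) m"
  proof unfold_locales
    show "\<And>a b. a \<in> carrier G \<Longrightarrow> b \<in> carrier G \<Longrightarrow> (q a b \<noteq> z) = (q b a \<noteq> z)"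
      using is_quat_struct by (simp add: quat_struct_def)
    show "\<And>a. a \<in> carrier G \<Longrightarrow> (q a a \<noteq> z) = (q a m \<noteq> z)"
      using q1 q_mult m by fastforce
    show "finite (carrier G)"
      using local_type by (simp add: local_type_def)
    show "\<exists>x\<in>carrier G. q a x \<noteq> z" if "a \<in> carrier G" "a \<noteq> \<one>" for a
      using local_type that by (auto simp: local_type_def nondegenerate_def)
  qed (simp_all add: q_mult m)
qed

abbreviation free_quats :: "('b \<Rightarrow>\<^sub>0 int) monoid" where
  "free_quats \<equiv> free_Abelian_group (quats G q)"

lemma q_one: "a \<in> carrier G \<Longrightarrow> q a \<one> = z"
  using form_one by blast

lemma BS_rels_subset: "BS_rels G q \<subseteq> carrier free_quats"
proof
  fix r assume "r \<in> BS_rels G q"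
  then obtain a b c where abc: "a \<in> carrier G" "b \<in> carrier G" "c \<in> carrier G"
    and r: "r = frag_of (q a b) + frag_of (q a c) - frag_of (q a (b \<otimes> c))"
    by (auto simp: BS_rels_def)
  have "Poly_Mapping.keys r \<subseteq> {q a b, q a c, q a (b \<otimes> c)}"
    unfolding r using keys_diff keys_add by (fastforce simp: keys_frag_of)
  then show "r \<in> carrier free_quats"
    using abc q_in_quats by auto
qed

lemma subgroup_BS_sub: "subgroup (BS_sub G q) free_quats"
  unfolding BS_sub_def by (rule group.generate_is_subgroup[OF group_free_Abelian_group BS_rels_subset])

lemma BS_sub_add: "x \<in> BS_sub G q \<Longrightarrow> y \<in> BS_sub G q \<Longrightarrow> x + y \<in> BS_sub G q"
  using subgroup.m_closed[OF subgroup_BS_sub] by fastforce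

lemma BS_sub_diff:
  assumes "x \<in> BS_sub G q" "y \<in> BS_sub G q"
  shows "x - y \<in> BS_sub G q"
proof -
  have "y \<in> carrier free_quats"
    using assms(2) subgroup.subset[OF subgroup_BS_sub] by blast
  then have "- y \<in> BS_sub G q"
    using subgroup.m_inv_closed[OF subgroup_BS_sub assms(2)] by simp
  then show ?thesis
    using BS_sub_add[OF assms(1), of "- y"] by simp
qed

lemma BS_rel_mem:
  "a \<in> carrier G \<Longrightarrow> b \<in> carrier G \<Longrightarrow> c \<in> carrier G \<Longrightarrow>
    frag_of (q a b) + frag_of (q a c) - frag_of (q a (b \<otimes> c)) \<in> BS_sub G q"
  unfolding BS_sub_def by (rule generate.incl) (auto simp: BS_rels_def)

lemma frag_of_z_mem: "frag_of z \<in> BS_sub G q"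
  using BS_rel_mem[OF one_closed one_closed one_closed] q_one by simp

lemma double_frag_of_e_mem: "frag_of e + frag_of e \<in> BS_sub G q"
proof -
  have "e \<in> quats G q"
    using quats_eq by simp
  then obtain a b where ab: "a \<in> carrier G" "b \<in> carrier G" "q a b = e"
    by (auto simp: quats_def)
  then have "frag_of e + frag_of e - frag_of z \<in> BS_sub G q"
    using BS_rel_mem[OF ab(1,2,2)] square_eq_one q_one by simp
  then show ?thesis
    using BS_sub_add[OF _ frag_of_z_mem] by fastforce
qed

lemma frag_of_e_not_mem: "frag_of e \<notin> BS_sub G q"
proof -
  txt \<open>By additivity of \<open>q\<close>, every defining relation has an even coefficient at \<open>e\<close>.\<close>
  define K where "K = {x \<in> carrier free_quats. even (Poly_Mapping.lookup x e)}"
  have "BS_rels G q \<subseteq> K"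
  proof
    fix r assume r: "r \<in> BS_rels G q"
    then obtain a b c where abc: "a \<in> carrier G" "b \<in> carrier G" "c \<in> carrier G"
      and r_eq: "r = frag_of (q a b) + frag_of (q a c) - frag_of (q a (b \<otimes> c))"
      by (auto simp: BS_rels_def)
    have "q a (b \<otimes> c) = e \<longleftrightarrow> (q a b = e) \<noteq> (q a c = e)"
      using q_mult[OF abc] q_cases abc e_neq_z by (metis m_closed)
    moreover have "Poly_Mapping.lookup r e =
        of_bool (q a b = e) + of_bool (q a c = e) - of_bool (q a (b \<otimes> c) = e)"
      by (simp add: r_eq lookup_add lookup_minus lookup_frag_of eq_commute[of e])
    ultimately have "even (Poly_Mapping.lookup r e)"
      by (cases "q a b = e"; cases "q a c = e") simp_all
    then show "r \<in> K"
      unfolding K_def using r BS_rels_subset by blast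
  qed
  moreover have "subgroup K free_quats"
    using keys_add by (intro group.subgroupI) (fastforce simp: K_def lookup_add keys_minus)+
  ultimately have "BS_sub G q \<subseteq> K"
    unfolding BS_sub_def by (rule group.generate_subgroup_incl[OF group_free_Abelian_group])
  then show ?thesis
    by (auto simp: K_def lookup_frag_of)
qed

lemma BS_sub_or_coset:
  assumes "Poly_Mapping.keys x \<subseteq> quats G q"
  shows "x \<in> BS_sub G q \<or> x - frag_of e \<in> BS_sub G q"
proof (rule free_Abelian_group_induct[OF assms])
  fix x y
  assume "x \<in> BS_sub G q \<or> x - frag_of e \<in> BS_sub G q" "y \<in> BS_sub G q \<or> y - frag_of e \<in> BS_sub G q"
  moreover have "x - y = (x - frag_of e) - (y - frag_of e)" "x - y - frag_of e = (x - frag_of e) - y"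
    "x - y - frag_of e = x - (y - frag_of e) - (frag_of e + frag_of e)"
    by simp_all
  ultimately show "x - y \<in> BS_sub G q \<or> x - y - frag_of e \<in> BS_sub G q"
    using BS_sub_diff double_frag_of_e_mem by metis
qed (use subgroup.one_closed[OF subgroup_BS_sub] frag_of_z_mem quats_eq in auto)

lemma comm_group_BS: "comm_group (BS G q)"
  unfolding BS_def by (rule comm_group.abelian_FactGroup[OF abelian_free_Abelian_group subgroup_BS_sub])

lemma one_BS: "\<one>\<^bsub>BS G q\<^esub> = BS_sub G q"
  by (simp add: BS_def)

lemma BS_of_z: "BS_of G q z = \<one>\<^bsub>BS G q\<^esub>"
  unfolding BS_of_def one_BS
  by (rule subgroup.rcos_const[OF subgroup_BS_sub group_free_Abelian_group frag_of_z_mem])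

lemma BS_of_e_neq_one: "BS_of G q e \<noteq> \<one>\<^bsub>BS G q\<^esub>"
proof
  have "frag_of e \<in> BS_of G q e"
    unfolding BS_of_def r_coset_def using subgroup.one_closed[OF subgroup_BS_sub] by force
  moreover assume "BS_of G q e = \<one>\<^bsub>BS G q\<^esub>"
  ultimately show False
    using frag_of_e_not_mem by (simp add: one_BS)
qed

lemma carrier_BS: "carrier (BS G q) = {\<one>\<^bsub>BS G q\<^esub>, BS_of G q e}"
proof -
  let ?H = "BS_sub G q"
  have cosets: "r_coset free_quats ?H x \<in> {?H, BS_of G q e}" if x: "x \<in> carrier free_quats" for x
  proof (cases "x \<in> ?H")
    case True
    then show ?thesis
      using subgroup.rcos_const[OF subgroup_BS_sub group_free_Abelian_group] by blast
  next
    case False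
    then have "x - frag_of e \<in> ?H"
      using BS_sub_or_coset x by auto
    then have "x \<in> r_coset free_quats ?H (frag_of e)"
      unfolding r_coset_def by (auto intro!: bexI[of _ "x - frag_of e"])
    then show ?thesis
      using group.repr_independence[OF group_free_Abelian_group _ _ subgroup_BS_sub] quats_eq
      by (simp add: BS_of_def)
  qed
  have img: "carrier (BS G q) = (\<lambda>x. r_coset free_quats ?H x) ` carrier free_quats"
    unfolding BS_def by (rule carrier_FactGroup)
  have "?H \<in> carrier (BS G q)"
    unfolding img using subgroup.rcos_const[OF subgroup_BS_sub group_free_Abelian_group]
      subgroup.one_closed[OF subgroup_BS_sub] by (intro image_eqI[of _ _ 0]) simp_all
  moreover have "BS_of G q e \<in> carrier (BS G q)"
    unfolding img BS_of_def using quats_eq by (intro image_eqI[of _ _ "frag_of e"]) simp_all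
  moreover have "carrier (BS G q) \<subseteq> {?H, BS_of G q e}"
    unfolding img image_subset_iff using cosets by blast
  ultimately show ?thesis
    unfolding one_BS by blast
qed

lemma qmat_eq_gram_matrix:
  assumes "f2_basis (BS G q) bs" "set as \<subseteq> carrier G"
  shows "qmat G q as bs = gram_matrix as"
proof -
  note two_element = carrier_BS BS_of_e_neq_one
  have "bs = [BS_of G q e]"
    using assms(1) comm_group.f2_basis_two_element_iff[OF comm_group_BS two_element] by simp
  then have "phi (BS G q) bs (BS_of G q (q a b)) = of_bool (q a b \<noteq> z)"
    if "a \<in> carrier G" "b \<in> carrier G" for a b
    using q_cases[OF that] BS_of_z e_neq_z comm_group.phi_two_element[OF comm_group_BS two_element]
    by auto
  then show ?thesis
    using assms(2) nth_mem unfolding qmat_def gram_matrix_def mat_of_def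
    by (intro map_cong refl) (auto simp: subset_iff)
qed

lemma qmat_image:
  "{qmat G q as bs |as bs. qbasis G m as \<and> f2_basis (BS G q) bs} = gram_matrix ` {as. qbasis G m as}"
proof (intro equalityI subsetI)
  fix M assume "M \<in> {qmat G q as bs |as bs. qbasis G m as \<and> f2_basis (BS G q) bs}"
  then obtain as bs where "M = qmat G q as bs" "qbasis G m as" "f2_basis (BS G q) bs"
    by blast
  then show "M \<in> gram_matrix ` {as. qbasis G m as}"
    using qmat_eq_gram_matrix by (auto simp: qbasis_def f2_basis_def)
next
  have BS_basis: "f2_basis (BS G q) [BS_of G q e]"
    using comm_group.f2_basis_two_element_iff[OF comm_group_BS carrier_BS BS_of_e_neq_one] by simp
  fix M assume "M \<in> gram_matrix ` {as. qbasis G m as}"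
  then obtain as where "M = gram_matrix as" "qbasis G m as"
    by blast
  then have "M = qmat G q as [BS_of G q e] \<and> qbasis G m as"
    using qmat_eq_gram_matrix[OF BS_basis] by (auto simp: qbasis_def f2_basis_def)
  then show "M \<in> {qmat G q as bs |as bs. qbasis G m as \<and> f2_basis (BS G q) bs}"
    using BS_basis by blast
qed

lemma normal_matrix_eqI:
  assumes xs: "qbasis G m xs" "has_gram xs (T (length xs))"
    and lower: "\<And>as. qbasis G m as \<Longrightarrow> gram_lex_ge as (T (length as))"
  shows "normal_matrix G m q = mat_of (length xs) (\<lambda>i j. of_bool (T (length xs) i j))"
proof -
  let ?n = "length xs"
  have basis: "f2_basis G as" "length as = ?n" if "qbasis G m as" for as
    using that xs(1) f2_basis_length_eq unfolding qbasis_def by blast+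
  then have "{as. qbasis G m as} \<subseteq> {as. set as \<subseteq> carrier G \<and> length as = ?n}"
    by (auto simp: f2_basis_def)
  then have "finite {as. qbasis G m as}"
    using finite_lists_length_eq[OF finite_carrier] finite_subset by blast
  moreover have "mat_of ?n (\<lambda>i j. of_bool (T ?n i j)) \<le> gram_matrix as" if "qbasis G m as" for as
    using gram_matrix_ge[OF lower[OF that]] basis[OF that] by simp
  moreover have "mat_of ?n (\<lambda>i j. of_bool (T ?n i j)) \<in> gram_matrix ` {as. qbasis G m as}"
    using gram_matrix_eq[OF xs(2)] xs(1) by (metis imageI mem_Collect_eq)
  ultimately show ?thesis
    unfolding normal_matrix_def qmat_image by (intro Min_eqI) auto
qed

lemma normal_matrix_antidiagonal:
  assumes "m = \<one>" "has_order G n"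
  shows "even n \<and> normal_matrix G m q = mat_of n (\<lambda>i j. of_bool (antidiagonal n i j))"
proof -
  obtain xs where xs: "f2_basis G xs" "even (length xs)" "has_gram xs (antidiagonal (length xs))"
    using f2_basis_antidiagonal assms(1) by blast
  have basis: "qbasis G m xs"
    using xs(1) assms(1) by (simp add: qbasis_def)
  have lower: "gram_lex_ge as (antidiagonal (length as))" if "qbasis G m as" for as
    using that by (intro gram_lex_ge_antidiagonal) (simp add: qbasis_def)
  have "normal_matrix G m q = mat_of (length xs) (\<lambda>i j. of_bool (antidiagonal (length xs) i j))"
    using normal_matrix_eqI[where T = antidiagonal, OF basis xs(3) lower] .
  then show ?thesis
    using xs(2) f2_basis_length[OF assms(2) xs(1)] by simp
qed

lemma normal_matrix_antidiagonal_corner: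
  assumes "m \<noteq> \<one>" "q m m = z" "has_order G n"
  shows "even n \<and> normal_matrix G m q = mat_of n (\<lambda>i j. of_bool (antidiagonal_corner n i j))"
proof -
  obtain xs where xs: "f2_basis G xs" "xs \<noteq> []" "xs ! 0 = m" "even (length xs)"
      "has_gram xs (antidiagonal_corner (length xs))"
    using f2_basis_antidiagonal_corner assms(1,2) by blast
  have basis: "qbasis G m xs"
    using xs(1-3) by (simp add: qbasis_def)
  have lower: "gram_lex_ge as (antidiagonal_corner (length as))" if "qbasis G m as" for as
    using that assms(1) by (intro gram_lex_ge_antidiagonal_corner) (simp_all add: qbasis_def)
  have "normal_matrix G m q = mat_of (length xs) (\<lambda>i j. of_bool (antidiagonal_corner (length xs) i j))"
    using normal_matrix_eqI[where T = antidiagonal_corner, OF basis xs(5) lower] .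
  then show ?thesis
    using xs(4) f2_basis_length[OF assms(3) xs(1)] by simp
qed

lemma normal_matrix_cyclic_antidiagonal:
  assumes "q m m \<noteq> z" "has_order G n"
  shows "odd n \<and> normal_matrix G m q = mat_of n (\<lambda>i j. of_bool (cyclic_antidiagonal n i j))"
proof -
  obtain xs where xs: "f2_basis G xs" "xs \<noteq> []" "xs ! 0 = m" "odd (length xs)"
      "has_gram xs (cyclic_antidiagonal (length xs))"
    using f2_basis_cyclic_antidiagonal assms(1) by blast
  have "m \<noteq> \<one>"
    using assms(1) q_one characteristic_closed by blast
  then have basis: "qbasis G m xs"
    using xs(1-3) by (simp add: qbasis_def)
  have lower: "gram_lex_ge as (cyclic_antidiagonal (length as))" if "qbasis G m as" for as
    using that \<open>m \<noteq> \<one>\<close> assms(1) by (intro gram_lex_ge_cyclic_antidiagonal) (simp_all add: qbasis_def)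
  have "normal_matrix G m q = mat_of (length xs) (\<lambda>i j. of_bool (cyclic_antidiagonal (length xs) i j))"
    using normal_matrix_eqI[where T = cyclic_antidiagonal, OF basis xs(5) lower] .
  then show ?thesis
    using xs(4) f2_basis_length[OF assms(2) xs(1)] by simp
qed

end

lemma local_type_quats_eq:
  assumes "local_type G m q z"
  obtains e where "quats G q = {z, e}" "e \<noteq> z"
proof -
  have "card (quats G q) = 2" "z \<in> quats G q"
    using assms by (simp_all add: local_type_def quat_struct_def)
  then obtain x y where "quats G q = {x, y}" "x \<noteq> y" "z \<in> {x, y}"
    by (auto simp: card_2_iff)
  then show thesis
    using that by (metis insert_commute insertE singletonD)
qed

theorem proposition5:
  fixes G :: "'a monoid" and m :: 'a and q :: "'a \<Rightarrow> 'a \<Rightarrow> 'b" and z :: 'b and n :: nat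
  assumes "local_type G m q z" and "has_order G n"
  shows "(even n \<and> m = \<one>\<^bsub>G\<^esub> \<longrightarrow>
            normal_matrix G m q = mat_of n (\<lambda>i j. if j = n - 1 - i then 1 else 0))
       \<and> (even n \<and> m \<noteq> \<one>\<^bsub>G\<^esub> \<longrightarrow>
            normal_matrix G m q = mat_of n (\<lambda>i j.
              if (i = 0 \<and> j = n - 1) \<or> (i = n - 1 \<and> j = 0) \<or> (i = n - 1 \<and> j = n - 1)
                 \<or> (1 \<le> i \<and> i \<le> n - 2 \<and> j = n - 1 - i) then 1 else 0))
       \<and> (odd n \<longrightarrow>
            normal_matrix G m q = mat_of n (\<lambda>i j.
              if (i = 0 \<and> j = 0) \<or> (1 \<le> i \<and> i \<le> n - 1 \<and> j = n - i) then 1 else 0))"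
proof -
  obtain e where "quats G q = {z, e}" "e \<noteq> z"
    using local_type_quats_eq[OF assms(1)] .
  then interpret local_quaternionic G m q z e
    using assms(1) by unfold_locales
  consider (trivial) "m = \<one>\<^bsub>G\<^esub>" | (isotropic) "m \<noteq> \<one>\<^bsub>G\<^esub>" "q m m = z"
    | (anisotropic) "q m m \<noteq> z"
    by blast
  then show ?thesis
  proof cases
    case trivial
    then show ?thesis
      using normal_matrix_antidiagonal[OF trivial assms(2)] mat_of_antidiagonal by simp
  next
    case isotropic
    then show ?thesis
      using normal_matrix_antidiagonal_corner[OF isotropic assms(2)] mat_of_antidiagonal_corner by simp
  next
    case anisotropic
    then show ?thesis
      using normal_matrix_cyclic_antidiagonal[OF anisotropic assms(2)] mat_of_cyclic_antidiagonal by simp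
  qed
qed

end
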